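(* Fix $E\in\mathbb R$, $\eta,\eta'>0$, a positive integer $N$, and a real symmetric $N\times N$ matrix $\mathbf H$. Let $z=E+\mathbf i\eta$, $z'=E+\mathbf i(\eta+\eta')$, $\mathbf G=(\mathbf H-z)^{-1}=\{G_{jk}\}$ and $\mathbf G'=(\mathbf H-z')^{-1}=\{G'_{jk}\}$. Then for every $j\in[1,N]$, $$\frac{\min\{|G'_{jj}|,|G_{jj}|\}}{\max\{|G'_{jj}|,|G_{jj}|\}}>1-\frac{\eta'}{\eta}.$$ *)

theory Defs
  imports "HOL-Analysis.Analysis"
begin

definition resolvent :: "real^'n^'n \<Rightarrow> complex \<Rightarrow> complex^'n^'n" where
  "resolvent H z = matrix_inv ((\<chi> i j. complex_of_real (H $ i $ j)) - mat z)"

end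

theory Submission
  imports Defs
begin

text \<open>Write \<open>A\<^sub>w = H - w\<close>. Because \<open>H\<close> is real symmetric, \<open>x\<^sup>T A\<^sub>w' y - y\<^sup>T A\<^sub>w x = (w - w') x\<^sup>T y\<close>
  for all complex vectors. Applied to two columns of resolvents this gives the resolvent identity
  \<open>G'\<^sub>j\<^sub>j - G\<^sub>j\<^sub>j = \<i>\<eta>' \<Sum>\<^sub>i G\<^sub>i\<^sub>j G'\<^sub>i\<^sub>j\<close>; applied to a column and its conjugate it gives the
  Ward identity \<open>Im G\<^sub>j\<^sub>j = \<eta> \<Sum>\<^sub>i |G\<^sub>i\<^sub>j|\<^sup>2\<close>. With \<open>P = \<Sum>|G\<^sub>i\<^sub>j|\<^sup>2\<close>, \<open>Q = \<Sum>|G'\<^sub>i\<^sub>j|\<^sup>2\<close> and Cauchy-Schwarz,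
  \<open>(|G'\<^sub>j\<^sub>j| - |G\<^sub>j\<^sub>j|)\<^sup>2 \<le> \<eta>'\<^sup>2 P Q \<le> \<eta>'\<^sup>2 |G\<^sub>j\<^sub>j| |G'\<^sub>j\<^sub>j| / (\<eta> (\<eta> + \<eta>')) < (\<eta>'/\<eta>)\<^sup>2 max(|G\<^sub>j\<^sub>j|, |G'\<^sub>j\<^sub>j|)\<^sup>2\<close>,
  which is the claim.\<close>

definition shifted_matrix :: "real^'n^'n \<Rightarrow> complex \<Rightarrow> complex^'n^'n" where
  "shifted_matrix H w = (\<chi> i j. complex_of_real (H $ i $ j)) - mat w"

lemma resolvent_eq_matrix_inv_shifted: "resolvent H w = matrix_inv (shifted_matrix H w)"
  by (simp add: resolvent_def shifted_matrix_def)

lemma shifted_matrix_mult_vec_nth: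
  "(shifted_matrix H w *v x) $ i = (\<Sum>k\<in>UNIV. of_real (H $ i $ k) * x $ k) - w * x $ i"
proof -
  have "(shifted_matrix H w *v x) $ i
          = (\<Sum>k\<in>UNIV. of_real (H $ i $ k) * x $ k - (if i = k then w * x $ k else 0))"
    unfolding shifted_matrix_def matrix_vector_mult_def mat_def
    by (auto intro!: sum.cong simp: algebra_simps)
  then show ?thesis
    by (simp add: sum_subtractf)
qed

lemma transpose_eq_self_nth:
  assumes "transpose A = A"
  shows "A $ k $ i = A $ i $ k"
  by (metis assms transpose_def vec_lambda_beta)

lemma sum_mult_axis_one:
  "(\<Sum>i\<in>UNIV. f i * axis j 1 $ i) = (f j :: 'a::comm_ring_1)"
  by (simp add: axis_def if_distrib cong: if_cong)

lemma shifted_matrix_symmetric_identity: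
  fixes H :: "real^'n^'n"
  assumes "transpose H = H"
  shows "(\<Sum>i\<in>UNIV. x $ i * (shifted_matrix H w' *v y) $ i)
           - (\<Sum>i\<in>UNIV. y $ i * (shifted_matrix H w *v x) $ i)
         = (w - w') * (\<Sum>i\<in>UNIV. x $ i * y $ i)"
proof -
  define T where "T = (\<Sum>i\<in>UNIV. \<Sum>k\<in>UNIV. of_real (H $ i $ k) * (x $ i * y $ k))"
  have xy: "(\<Sum>i\<in>UNIV. x $ i * (shifted_matrix H w' *v y) $ i) = T - w' * (\<Sum>i\<in>UNIV. x $ i * y $ i)"
    by (simp add: T_def shifted_matrix_mult_vec_nth right_diff_distrib sum_subtractf
        sum_distrib_left mult_ac)
  have "(\<Sum>i\<in>UNIV. \<Sum>k\<in>UNIV. of_real (H $ i $ k) * (y $ i * x $ k))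
          = (\<Sum>k\<in>UNIV. \<Sum>i\<in>UNIV. of_real (H $ i $ k) * (y $ i * x $ k))"
    by (rule sum.swap)
  also have "\<dots> = T"
    unfolding T_def using transpose_eq_self_nth[OF assms] by (simp add: mult_ac)
  finally have yx: "(\<Sum>i\<in>UNIV. y $ i * (shifted_matrix H w *v x) $ i) = T - w * (\<Sum>i\<in>UNIV. x $ i * y $ i)"
    by (simp add: shifted_matrix_mult_vec_nth right_diff_distrib sum_subtractf
        sum_distrib_left mult_ac)
  show ?thesis
    unfolding xy yx by (simp add: algebra_simps)
qed

lemma Im_shifted_matrix_quadratic_form:
  fixes H :: "real^'n^'n"
  assumes "transpose H = H"
  shows "Im (\<Sum>i\<in>UNIV. cnj (x $ i) * (shifted_matrix H w *v x) $ i)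
           = - Im w * (\<Sum>i\<in>UNIV. (cmod (x $ i))\<^sup>2)"
proof -
  define S where "S = (\<Sum>i\<in>UNIV. cnj (x $ i) * (shifted_matrix H w *v x) $ i)"
  define x' where "x' = (\<chi> i. cnj (x $ i))"
  have "shifted_matrix H (cnj w) *v x' = (\<chi> i. cnj ((shifted_matrix H w *v x) $ i))"
    by (simp add: vec_eq_iff x'_def shifted_matrix_mult_vec_nth)
  then have "(\<Sum>i\<in>UNIV. x $ i * (shifted_matrix H (cnj w) *v x') $ i) = cnj S"
    by (simp add: S_def)
  moreover have "(\<Sum>i\<in>UNIV. x' $ i * (shifted_matrix H w *v x) $ i) = S"
    by (simp add: S_def x'_def)
  moreover have "(\<Sum>i\<in>UNIV. x $ i * x' $ i) = of_real (\<Sum>i\<in>UNIV. (cmod (x $ i))\<^sup>2)"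
    unfolding of_real_sum complex_norm_square by (simp add: x'_def)
  ultimately have "cnj S - S = (w - cnj w) * of_real (\<Sum>i\<in>UNIV. (cmod (x $ i))\<^sup>2)"
    using shifted_matrix_symmetric_identity[OF assms, of x "cnj w" x' w] by simp
  then have "Im (cnj S - S) = Im ((w - cnj w) * of_real (\<Sum>i\<in>UNIV. (cmod (x $ i))\<^sup>2))"
    by (rule arg_cong)
  then have "Im S = - Im w * (\<Sum>i\<in>UNIV. (cmod (x $ i))\<^sup>2)"
    by simp
  then show ?thesis
    unfolding S_def .
qed

lemma shifted_matrix_invertible:
  fixes H :: "real^'n^'n"
  assumes "transpose H = H" and "Im w \<noteq> 0"
  shows "invertible (shifted_matrix H w)"
proof -
  have "x = 0" if "shifted_matrix H w *v x = 0" for x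
  proof -
    have "Im w * (\<Sum>i\<in>UNIV. (cmod (x $ i))\<^sup>2) = 0"
      using Im_shifted_matrix_quadratic_form[OF assms(1), of x w] that by simp
    then have "(\<Sum>i\<in>UNIV. (cmod (x $ i))\<^sup>2) = 0"
      using assms(2) by simp
    then show "x = 0"
      by (simp add: sum_nonneg_eq_0_iff vec_eq_iff)
  qed
  then show ?thesis
    unfolding invertible_left_inverse matrix_left_invertible_ker by blast
qed

lemma shifted_matrix_mult_resolvent:
  fixes H :: "real^'n^'n"
  assumes "transpose H = H" and "Im w \<noteq> 0"
  shows "shifted_matrix H w ** resolvent H w = mat 1"
  using shifted_matrix_invertible[OF assms]
  unfolding resolvent_eq_matrix_inv_shifted matrix_inv_def invertible_def
  by (rule someI_ex[THEN conjunct1])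

lemma shifted_matrix_mult_resolvent_column:
  fixes H :: "real^'n^'n"
  assumes "transpose H = H" and "Im w \<noteq> 0"
  shows "shifted_matrix H w *v (\<chi> i. resolvent H w $ i $ j) = axis j 1"
proof -
  have "(\<chi> i. resolvent H w $ i $ j) = resolvent H w *v axis j 1"
    by (simp add: vec_eq_iff matrix_vector_mult_def axis_def if_distrib cong: if_cong)
  then show ?thesis
    by (simp add: matrix_vector_mul_assoc shifted_matrix_mult_resolvent[OF assms])
qed

lemma Im_resolvent_diag:
  fixes H :: "real^'n^'n"
  assumes "transpose H = H" and "Im w \<noteq> 0"
  shows "Im (resolvent H w $ j $ j) = Im w * (\<Sum>i\<in>UNIV. (cmod (resolvent H w $ i $ j))\<^sup>2)"
  using Im_shifted_matrix_quadratic_form[OF assms(1), of "\<chi> i. resolvent H w $ i $ j" w]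
  by (simp add: shifted_matrix_mult_resolvent_column[OF assms] sum_mult_axis_one)

lemma resolvent_diag_diff:
  fixes H :: "real^'n^'n"
  assumes "transpose H = H" and "Im w \<noteq> 0" and "Im w' \<noteq> 0"
  shows "resolvent H w' $ j $ j - resolvent H w $ j $ j
           = (w' - w) * (\<Sum>i\<in>UNIV. resolvent H w $ i $ j * resolvent H w' $ i $ j)"
proof -
  have "resolvent H w $ j $ j - resolvent H w' $ j $ j
          = (w - w') * (\<Sum>i\<in>UNIV. resolvent H w $ i $ j * resolvent H w' $ i $ j)"
    using shifted_matrix_symmetric_identity[OF assms(1),
        of "\<chi> i. resolvent H w $ i $ j" w' "\<chi> i. resolvent H w' $ i $ j" w]
    by (simp add: shifted_matrix_mult_resolvent_column assms sum_mult_axis_one)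
  then show ?thesis
    by (simp add: algebra_simps)
qed

lemma cmod_sum_mult_power2_le:
  "(cmod (\<Sum>i\<in>I. f i * g i))\<^sup>2 \<le> (\<Sum>i\<in>I. (cmod (f i))\<^sup>2) * (\<Sum>i\<in>I. (cmod (g i))\<^sup>2)"
proof -
  have "cmod (\<Sum>i\<in>I. f i * g i) \<le> (\<Sum>i\<in>I. cmod (f i) * cmod (g i))"
    by (rule order_trans[OF norm_sum]) (simp add: norm_mult)
  then have "(cmod (\<Sum>i\<in>I. f i * g i))\<^sup>2 \<le> (\<Sum>i\<in>I. cmod (f i) * cmod (g i))\<^sup>2"
    by (simp add: power_mono)
  also have "\<dots> \<le> (\<Sum>i\<in>I. (cmod (f i))\<^sup>2) * (\<Sum>i\<in>I. (cmod (g i))\<^sup>2)"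
    by (rule Cauchy_Schwarz_ineq_sum)
  finally show ?thesis .
qed

lemma resolvent_column_sum_sq_pos:
  fixes H :: "real^'n^'n"
  assumes "transpose H = H" and "Im w \<noteq> 0"
  shows "(\<Sum>i\<in>UNIV. (cmod (resolvent H w $ i $ j))\<^sup>2) > 0"
proof -
  have "(\<chi> i. resolvent H w $ i $ j) \<noteq> 0"
    using shifted_matrix_mult_resolvent_column[OF assms, of j]
    by (metis axis_nth matrix_vector_mult_0_right zero_index zero_neq_one)
  then have "(\<Sum>i\<in>UNIV. (cmod (resolvent H w $ i $ j))\<^sup>2) \<noteq> 0"
    by (simp add: sum_nonneg_eq_0_iff vec_eq_iff)
  then show ?thesis
    by (simp add: order_le_neq_trans sum_nonneg)
qed

lemma Im_mult_resolvent_column_le_cmod_diag: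
  fixes H :: "real^'n^'n"
  assumes "transpose H = H" and "Im w \<noteq> 0"
  shows "Im w * (\<Sum>i\<in>UNIV. (cmod (resolvent H w $ i $ j))\<^sup>2) \<le> cmod (resolvent H w $ j $ j)"
  using Im_resolvent_diag[OF assms, of j] abs_Im_le_cmod[of "resolvent H w $ j $ j"] by simp

lemma cmod_resolvent_diag_diff_power2_le:
  fixes H :: "real^'n^'n"
  assumes "transpose H = H" and "Im w \<noteq> 0" and "Im w' \<noteq> 0"
  shows "(cmod (resolvent H w' $ j $ j) - cmod (resolvent H w $ j $ j))\<^sup>2
           \<le> (cmod (w' - w))\<^sup>2 * ((\<Sum>i\<in>UNIV. (cmod (resolvent H w $ i $ j))\<^sup>2)
                                 * (\<Sum>i\<in>UNIV. (cmod (resolvent H w' $ i $ j))\<^sup>2))"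
proof -
  have "(cmod (resolvent H w' $ j $ j) - cmod (resolvent H w $ j $ j))\<^sup>2
          \<le> (cmod (resolvent H w' $ j $ j - resolvent H w $ j $ j))\<^sup>2"
    by (metis abs_le_square_iff abs_norm_cancel norm_triangle_ineq3)
  also have "\<dots> = (cmod (w' - w))\<^sup>2
                     * (cmod (\<Sum>i\<in>UNIV. resolvent H w $ i $ j * resolvent H w' $ i $ j))\<^sup>2"
    by (simp add: resolvent_diag_diff[OF assms] norm_mult power_mult_distrib)
  also have "\<dots> \<le> (cmod (w' - w))\<^sup>2 * ((\<Sum>i\<in>UNIV. (cmod (resolvent H w $ i $ j))\<^sup>2)
                                      * (\<Sum>i\<in>UNIV. (cmod (resolvent H w' $ i $ j))\<^sup>2))"
    by (intro mult_left_mono cmod_sum_mult_power2_le) auto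
  finally show ?thesis .
qed

lemma min_div_max_gt:
  fixes a b e e' P Q :: real
  assumes "e > 0" and "e' > 0" and "P > 0" and "Q > 0"
    and "e * P \<le> a" and "(e + e') * Q \<le> b" and "(b - a)\<^sup>2 \<le> e'\<^sup>2 * (P * Q)"
  shows "min b a / max b a > 1 - e' / e"
proof -
  define M where "M = max b a"
  have "e * P > 0" and "(e + e') * Q > 0"
    using assms(1-4) by simp_all
  then have "a > 0" and "b > 0"
    using assms(5,6) by linarith+
  have "P \<le> a / e" and "Q \<le> b / (e + e')"
    using assms by (simp_all add: field_simps)
  then have "P * Q \<le> (a / e) * (b / (e + e'))"
    using assms by (intro mult_mono) auto
  also have "\<dots> < (a / e) * (b / e)"
    using assms \<open>a > 0\<close> \<open>b > 0\<close> by (intro mult_strict_left_mono divide_strict_left_mono) auto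
  also have "\<dots> \<le> (M / e)\<^sup>2"
    using assms \<open>a > 0\<close> \<open>b > 0\<close> by (simp add: M_def power2_eq_square divide_simps mult_mono)
  finally have "e'\<^sup>2 * (P * Q) < e'\<^sup>2 * (M / e)\<^sup>2"
    using assms(2) by simp
  then have "(b - a)\<^sup>2 < e'\<^sup>2 * (M / e)\<^sup>2"
    using assms(7) by linarith
  also have "\<dots> = (e' * M / e)\<^sup>2"
    by (simp add: power_mult_distrib power_divide)
  finally have "(b - a)\<^sup>2 < (e' * M / e)\<^sup>2" .
  then have "\<bar>b - a\<bar>\<^sup>2 < (e' * M / e)\<^sup>2"
    by simp
  moreover have "M > 0"
    using \<open>a > 0\<close> by (simp add: M_def)
  then have "e' * M / e \<ge> 0"
    using assms(1,2) by simp
  ultimately have "\<bar>b - a\<bar> < e' * M / e"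
    by (rule power_less_imp_less_base)
  then have "\<bar>b - a\<bar> / M < e' / e"
    using assms(1,2) \<open>M > 0\<close> by (simp add: divide_less_eq)
  moreover have "min b a / M = 1 - \<bar>b - a\<bar> / M"
    using \<open>M > 0\<close> by (auto simp: M_def max_def min_def field_simps)
  ultimately show ?thesis
    by (simp add: M_def)
qed

theorem corollaryB2:
  fixes H :: "real^'n^'n" and E \<eta> \<eta>' :: real and j :: 'n
  assumes "\<eta> > 0" and "\<eta>' > 0"
    and "transpose H = H"
  shows "let z = Complex E \<eta>; z' = Complex E (\<eta> + \<eta>');
             g = cmod (resolvent H z $ j $ j); g' = cmod (resolvent H z' $ j $ j)
         in min g' g / max g' g > 1 - \<eta>' / \<eta>"
proof -
  define z where "z = Complex E \<eta>"
  define z' where "z' = Complex E (\<eta> + \<eta>')"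
  define P where "P = (\<Sum>i\<in>UNIV. (cmod (resolvent H z $ i $ j))\<^sup>2)"
  define Q where "Q = (\<Sum>i\<in>UNIV. (cmod (resolvent H z' $ i $ j))\<^sup>2)"
  have Im: "Im z = \<eta>" "Im z' = \<eta> + \<eta>'" and "cmod (z' - z) = \<eta>'"
    using assms(2) by (simp_all add: z_def z'_def cmod_def)
  then have Im_nonzero: "Im z \<noteq> 0" "Im z' \<noteq> 0"
    using assms(1,2) by simp_all
  have P_Q_pos: "P > 0" "Q > 0"
    unfolding P_def Q_def using resolvent_column_sum_sq_pos[OF assms(3)] Im_nonzero by blast+
  have "\<eta> * P \<le> cmod (resolvent H z $ j $ j)" "(\<eta> + \<eta>') * Q \<le> cmod (resolvent H z' $ j $ j)"
    unfolding P_def Q_def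
    using Im_mult_resolvent_column_le_cmod_diag[OF assms(3)] Im_nonzero Im by metis+
  moreover have "(cmod (resolvent H z' $ j $ j) - cmod (resolvent H z $ j $ j))\<^sup>2 \<le> \<eta>'\<^sup>2 * (P * Q)"
    unfolding P_def Q_def
    using cmod_resolvent_diag_diff_power2_le[OF assms(3) Im_nonzero] \<open>cmod (z' - z) = \<eta>'\<close> by simp
  ultimately show ?thesis
    using min_div_max_gt[OF assms(1,2) P_Q_pos] unfolding z_def z'_def Let_def by blast
qed

end
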